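(* Let $(M,\diamond,\bullet,\alpha_M)$ be a module over the multiplicative Hom-post-Lie algebra $(L,[\cdot,\cdot],\cdot,\alpha)$. Let $\beta_M:M\to M$ be a linear map such that $\alpha_M\circ\beta_M=\beta_M\circ\alpha_M$, $\beta_M(x\diamond m)=\alpha(x)\diamond\beta_M(m)$ and $\beta_M(x\bullet m)=\alpha(x)\bullet\beta_M(m)$ for all $x\in L,m\in M$. Define $x\,\tilde\diamond\, m=\beta_M(\alpha(x)\diamond m)$ and $x\,\tilde\bullet\, m=\beta_M(\alpha(x)\bullet m)$. Then $(M,\tilde\diamond,\tilde\bullet,\alpha_M\circ\beta_M)$ is a module over $(L,\alpha\circ[\cdot,\cdot],\alpha\circ\cdot,\alpha^2)$.
   Context: All vector spaces are over a field $\mathbb{K}$ of characteristic $\neq 2$. A Hom-Lie algebra is $(L,[\cdot,\cdot],\alpha)$ with $[\cdot,\cdot]$ bilinear skew-symmetric, $\alpha$ linear, and $[\alpha(x),[y,z]]+[\alpha(y),[z,x]]+[\alpha(z),[x,y]]=0$. A Hom-post-Lie algebra $(L,[\cdot,\cdot],\cdot,\alpha)$ is a Hom-Lie algebra with bilinear $\cdot$ such that $\alpha(z)\cdot[x,y]-[z\cdot x,\alpha(y)]-[\alpha(x),z\cdot y]=0$ and $\alpha(z)\cdot(y\cdot x)-\alpha(y)\cdot(z\cdot x)+(y\cdot z)\cdot\alpha(x)-(z\cdot y)\cdot\alpha(x)+[y,z]\cdot\alpha(x)=0$ for all $x,y,z$; it is multiplicative if $\alpha([x,y])=[\alpha(x),\alpha(y)]$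 and $\alpha(x\cdot y)=\alpha(x)\cdot\alpha(y)$. A module over a Hom-post-Lie algebra $(L,[\cdot,\cdot],\cdot,\alpha)$ is a vector space $M$ with linear $\alpha_M$ and bilinear $\diamond,\bullet:L\otimes M\to M$ such that for all $x,y\in L,m\in M$: (i) $\alpha_M(x\diamond m)=\alpha(x)\diamond\alpha_M(m)$, $\alpha_M(x\bullet m)=\alpha(x)\bullet\alpha_M(m)$; (ii) $[x,y]\diamond\alpha_M(m)=\alpha(x)\diamond(y\diamond m)-\alpha(y)\diamond(x\diamond m)$; (iii) $(x\cdot y)\diamond\alpha_M(m)=\alpha(x)\bullet(y\diamond m)-\alpha(y)\diamond(x\bullet m)$; (iv) $[x,y]\bullet\alpha_M(m)=\alpha(x)\bullet(y\bullet m)-\alpha(y)\bullet(x\bullet m)-(x\cdot y)\bullet\alpha_M(m)+(y\cdot x)\bullet\alpha_M(m)$. *)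

theory Defs
  imports Complex_Main
begin

definition bilinear_map ::
  "('k::field \<Rightarrow> 'a::ab_group_add \<Rightarrow> 'a) \<Rightarrow> ('k \<Rightarrow> 'b::ab_group_add \<Rightarrow> 'b)
   \<Rightarrow> ('k \<Rightarrow> 'c::ab_group_add \<Rightarrow> 'c) \<Rightarrow> ('a \<Rightarrow> 'b \<Rightarrow> 'c) \<Rightarrow> bool" where
  "bilinear_map sA sB sC f \<longleftrightarrow>
     (\<forall>x. Vector_Spaces.linear sB sC (f x)) \<and> (\<forall>y. Vector_Spaces.linear sA sC (\<lambda>x. f x y))"

definition hom_lie_algebra ::
  "('k::field \<Rightarrow> 'l::ab_group_add \<Rightarrow> 'l) \<Rightarrow> ('l \<Rightarrow> 'l \<Rightarrow> 'l) \<Rightarrow> ('l \<Rightarrow> 'l) \<Rightarrow> bool" where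
  "hom_lie_algebra sL br \<alpha> \<longleftrightarrow>
     vector_space sL \<and> bilinear_map sL sL sL br \<and> (\<forall>x y. br x y = - br y x) \<and>
     Vector_Spaces.linear sL sL \<alpha> \<and>
     (\<forall>x y z. br (\<alpha> x) (br y z) + br (\<alpha> y) (br z x) + br (\<alpha> z) (br x y) = 0)"

definition hom_post_lie_algebra ::
  "('k::field \<Rightarrow> 'l::ab_group_add \<Rightarrow> 'l) \<Rightarrow> ('l \<Rightarrow> 'l \<Rightarrow> 'l) \<Rightarrow> ('l \<Rightarrow> 'l \<Rightarrow> 'l)
   \<Rightarrow> ('l \<Rightarrow> 'l) \<Rightarrow> bool" where
  "hom_post_lie_algebra sL br dot \<alpha> \<longleftrightarrow>
     hom_lie_algebra sL br \<alpha> \<and> bilinear_map sL sL sL dot \<and>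
     (\<forall>x y z. dot (\<alpha> z) (br x y) - br (dot z x) (\<alpha> y) - br (\<alpha> x) (dot z y) = 0) \<and>
     (\<forall>x y z. dot (\<alpha> z) (dot y x) - dot (\<alpha> y) (dot z x) + dot (dot y z) (\<alpha> x)
               - dot (dot z y) (\<alpha> x) + dot (br y z) (\<alpha> x) = 0)"

definition multiplicative_hom_post_lie ::
  "('k::field \<Rightarrow> 'l::ab_group_add \<Rightarrow> 'l) \<Rightarrow> ('l \<Rightarrow> 'l \<Rightarrow> 'l) \<Rightarrow> ('l \<Rightarrow> 'l \<Rightarrow> 'l)
   \<Rightarrow> ('l \<Rightarrow> 'l) \<Rightarrow> bool" where
  "multiplicative_hom_post_lie sL br dot \<alpha> \<longleftrightarrow>
     hom_post_lie_algebra sL br dot \<alpha> \<and>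
     (\<forall>x y. \<alpha> (br x y) = br (\<alpha> x) (\<alpha> y)) \<and> (\<forall>x y. \<alpha> (dot x y) = dot (\<alpha> x) (\<alpha> y))"

definition hom_post_lie_module ::
  "('k::field \<Rightarrow> 'l::ab_group_add \<Rightarrow> 'l) \<Rightarrow> ('l \<Rightarrow> 'l \<Rightarrow> 'l) \<Rightarrow> ('l \<Rightarrow> 'l \<Rightarrow> 'l) \<Rightarrow> ('l \<Rightarrow> 'l)
   \<Rightarrow> ('k \<Rightarrow> 'm::ab_group_add \<Rightarrow> 'm) \<Rightarrow> ('l \<Rightarrow> 'm \<Rightarrow> 'm) \<Rightarrow> ('l \<Rightarrow> 'm \<Rightarrow> 'm)
   \<Rightarrow> ('m \<Rightarrow> 'm) \<Rightarrow> bool" where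
  "hom_post_lie_module sL br dot \<alpha> sM dia bul \<alpha>M \<longleftrightarrow>
     hom_post_lie_algebra sL br dot \<alpha> \<and> vector_space sM \<and>
     Vector_Spaces.linear sM sM \<alpha>M \<and>
     bilinear_map sL sM sM dia \<and> bilinear_map sL sM sM bul \<and>
     (\<forall>x m. \<alpha>M (dia x m) = dia (\<alpha> x) (\<alpha>M m)) \<and>
     (\<forall>x m. \<alpha>M (bul x m) = bul (\<alpha> x) (\<alpha>M m)) \<and>
     (\<forall>x y m. dia (br x y) (\<alpha>M m) = dia (\<alpha> x) (dia y m) - dia (\<alpha> y) (dia x m)) \<and>
     (\<forall>x y m. dia (dot x y) (\<alpha>M m) = bul (\<alpha> x) (dia y m) - dia (\<alpha> y) (bul x m)) \<and>
     (\<forall>x y m. bul (br x y) (\<alpha>M m) = bul (\<alpha> x) (bul y m) - bul (\<alpha> y) (bul x m)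
                 - bul (dot x y) (\<alpha>M m) + bul (dot y x) (\<alpha>M m))"

end

theory Submission
  imports Defs
begin

text \<open>Twisting along morphisms (Yau's construction): every axiom of the twisted structure is the
  image under the twisting maps of the corresponding original axiom, instantiated at twisted
  arguments. Pushing the twisting maps inwards only needs that they are linear, multiplicative and
  commute with the structure maps \<open>\<alpha>\<close> and \<open>\<alpha>M\<close>. The theorem is the case where \<open>\<alpha>\<close> itself is
  the twisting morphism of the algebra.\<close>

lemma bilinear_map_twist:
  assumes f: "bilinear_map sA sB sC f"
    and h: "Vector_Spaces.linear sA sA h" and g: "Vector_Spaces.linear sC sC g"
  shows "bilinear_map sA sB sC (\<lambda>x y. g (f (h x) y))"
proof -
  have "Vector_Spaces.linear sB sC (g \<circ> f (h x))"
    and "Vector_Spaces.linear sA sC (g \<circ> (\<lambda>x. f x y) \<circ> h)" for x y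
    using f g h Vector_Spaces.linear_compose unfolding bilinear_map_def by metis+
  then show ?thesis
    unfolding bilinear_map_def by (simp add: o_def)
qed

lemma hom_post_lie_algebra_twist:
  assumes alg: "hom_post_lie_algebra sL br dot \<alpha>"
    and lin: "Vector_Spaces.linear sL sL \<gamma>"
    and \<gamma>_br: "\<And>x y. \<gamma> (br x y) = br (\<gamma> x) (\<gamma> y)"
    and \<gamma>_dot: "\<And>x y. \<gamma> (dot x y) = dot (\<gamma> x) (\<gamma> y)"
  shows "hom_post_lie_algebra sL (\<lambda>x y. \<gamma> (br x y)) (\<lambda>x y. \<gamma> (dot x y)) (\<gamma> \<circ> \<alpha>)"
proof -
  interpret \<gamma>: Vector_Spaces.linear sL sL \<gamma> by (rule lin)
  from alg have vs: "vector_space sL" and bil_br: "bilinear_map sL sL sL br"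
    and bil_dot: "bilinear_map sL sL sL dot"
    and skew: "\<And>x y. br x y = - br y x" and lin_\<alpha>: "Vector_Spaces.linear sL sL \<alpha>"
    and jacobi: "\<And>x y z. br (\<alpha> x) (br y z) + br (\<alpha> y) (br z x) + br (\<alpha> z) (br x y) = 0"
    and derivation: "\<And>x y z. dot (\<alpha> z) (br x y) - br (dot z x) (\<alpha> y) - br (\<alpha> x) (dot z y) = 0"
    and flatness: "\<And>x y z. dot (\<alpha> z) (dot y x) - dot (\<alpha> y) (dot z x) + dot (dot y z) (\<alpha> x)
                             - dot (dot z y) (\<alpha> x) + dot (br y z) (\<alpha> x) = 0"
    unfolding hom_post_lie_algebra_def hom_lie_algebra_def by blast+
  have id: "Vector_Spaces.linear sL sL (\<lambda>x. x)"
    using vs by (rule vector_space.linear_ident)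
  show ?thesis
    unfolding hom_post_lie_algebra_def hom_lie_algebra_def
  proof (intro conjI allI)
    show "bilinear_map sL sL sL (\<lambda>x y. \<gamma> (br x y))" "bilinear_map sL sL sL (\<lambda>x y. \<gamma> (dot x y))"
      using bilinear_map_twist[OF bil_br id lin] bilinear_map_twist[OF bil_dot id lin] by simp_all
    show "Vector_Spaces.linear sL sL (\<gamma> \<circ> \<alpha>)"
      using lin_\<alpha> lin by (rule Vector_Spaces.linear_compose)
    fix x y z
    show "\<gamma> (br x y) = - \<gamma> (br y x)"
      by (subst skew) (rule \<gamma>.neg)
    have "\<gamma> (\<gamma> (br (\<alpha> x) (br y z) + br (\<alpha> y) (br z x) + br (\<alpha> z) (br x y))) = 0"
      by (simp add: jacobi)
    then show "\<gamma> (br ((\<gamma> \<circ> \<alpha>) x) (\<gamma> (br y z))) + \<gamma> (br ((\<gamma> \<circ> \<alpha>) y) (\<gamma> (br z x)))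
        + \<gamma> (br ((\<gamma> \<circ> \<alpha>) z) (\<gamma> (br x y))) = 0"
      by (simp add: \<gamma>.add \<gamma>_br)
    have "\<gamma> (\<gamma> (dot (\<alpha> z) (br x y) - br (dot z x) (\<alpha> y) - br (\<alpha> x) (dot z y))) = 0"
      by (simp add: derivation)
    then show "\<gamma> (dot ((\<gamma> \<circ> \<alpha>) z) (\<gamma> (br x y))) - \<gamma> (br (\<gamma> (dot z x)) ((\<gamma> \<circ> \<alpha>) y))
        - \<gamma> (br ((\<gamma> \<circ> \<alpha>) x) (\<gamma> (dot z y))) = 0"
      by (simp add: \<gamma>.diff \<gamma>_br \<gamma>_dot)
    have "\<gamma> (\<gamma> (dot (\<alpha> z) (dot y x) - dot (\<alpha> y) (dot z x) + dot (dot y z) (\<alpha> x)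
              - dot (dot z y) (\<alpha> x) + dot (br y z) (\<alpha> x))) = 0"
      by (simp add: flatness)
    then show "\<gamma> (dot ((\<gamma> \<circ> \<alpha>) z) (\<gamma> (dot y x))) - \<gamma> (dot ((\<gamma> \<circ> \<alpha>) y) (\<gamma> (dot z x)))
        + \<gamma> (dot (\<gamma> (dot y z)) ((\<gamma> \<circ> \<alpha>) x)) - \<gamma> (dot (\<gamma> (dot z y)) ((\<gamma> \<circ> \<alpha>) x))
        + \<gamma> (dot (\<gamma> (br y z)) ((\<gamma> \<circ> \<alpha>) x)) = 0"
      by (simp add: \<gamma>.add \<gamma>.diff \<gamma>_br \<gamma>_dot)
  qed (fact vs)
qed

lemma hom_post_lie_module_twist:
  assumes modl: "hom_post_lie_module sL br dot \<alpha> sM dia bul \<alpha>M"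
    and lin_\<gamma>: "Vector_Spaces.linear sL sL \<gamma>"
    and \<gamma>_br: "\<And>x y. \<gamma> (br x y) = br (\<gamma> x) (\<gamma> y)"
    and \<gamma>_dot: "\<And>x y. \<gamma> (dot x y) = dot (\<gamma> x) (\<gamma> y)"
    and \<gamma>_\<alpha>: "\<And>x. \<gamma> (\<alpha> x) = \<alpha> (\<gamma> x)"
    and lin_\<beta>: "Vector_Spaces.linear sM sM \<beta>M"
    and comm: "\<alpha>M \<circ> \<beta>M = \<beta>M \<circ> \<alpha>M"
    and \<beta>_dia: "\<And>x m. \<beta>M (dia x m) = dia (\<gamma> x) (\<beta>M m)"
    and \<beta>_bul: "\<And>x m. \<beta>M (bul x m) = bul (\<gamma> x) (\<beta>M m)"
  shows "hom_post_lie_module sL (\<lambda>x y. \<gamma> (br x y)) (\<lambda>x y. \<gamma> (dot x y)) (\<gamma> \<circ> \<alpha>)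
           sM (\<lambda>x m. \<beta>M (dia (\<gamma> x) m)) (\<lambda>x m. \<beta>M (bul (\<gamma> x) m)) (\<alpha>M \<circ> \<beta>M)"
proof -
  interpret \<beta>M: Vector_Spaces.linear sM sM \<beta>M by (rule lin_\<beta>)
  from modl have alg: "hom_post_lie_algebra sL br dot \<alpha>" and vs: "vector_space sM"
    and lin_\<alpha>M: "Vector_Spaces.linear sM sM \<alpha>M"
    and bil_dia: "bilinear_map sL sM sM dia" and bil_bul: "bilinear_map sL sM sM bul"
    and \<alpha>M_dia: "\<And>x m. \<alpha>M (dia x m) = dia (\<alpha> x) (\<alpha>M m)"
    and \<alpha>M_bul: "\<And>x m. \<alpha>M (bul x m) = bul (\<alpha> x) (\<alpha>M m)"
    and dia_br: "\<And>x y m. dia (br x y) (\<alpha>M m) = dia (\<alpha> x) (dia y m) - dia (\<alpha> y) (dia x m)"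
    and dia_dot: "\<And>x y m. dia (dot x y) (\<alpha>M m) = bul (\<alpha> x) (dia y m) - dia (\<alpha> y) (bul x m)"
    and bul_br: "\<And>x y m. bul (br x y) (\<alpha>M m) = bul (\<alpha> x) (bul y m) - bul (\<alpha> y) (bul x m)
                            - bul (dot x y) (\<alpha>M m) + bul (dot y x) (\<alpha>M m)"
    unfolding hom_post_lie_module_def by blast+
  have \<alpha>M_\<beta>M: "\<alpha>M (\<beta>M m) = \<beta>M (\<alpha>M m)" for m
    using comm by (metis comp_apply)
  show ?thesis
    unfolding hom_post_lie_module_def
  proof (intro conjI allI)
    show "hom_post_lie_algebra sL (\<lambda>x y. \<gamma> (br x y)) (\<lambda>x y. \<gamma> (dot x y)) (\<gamma> \<circ> \<alpha>)"
      by (rule hom_post_lie_algebra_twist[OF alg lin_\<gamma>]) (rule \<gamma>_br \<gamma>_dot)+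
    show "bilinear_map sL sM sM (\<lambda>x m. \<beta>M (dia (\<gamma> x) m))"
      using bil_dia lin_\<gamma> lin_\<beta> by (rule bilinear_map_twist)
    show "bilinear_map sL sM sM (\<lambda>x m. \<beta>M (bul (\<gamma> x) m))"
      using bil_bul lin_\<gamma> lin_\<beta> by (rule bilinear_map_twist)
    show "Vector_Spaces.linear sM sM (\<alpha>M \<circ> \<beta>M)"
      using lin_\<beta> lin_\<alpha>M by (rule Vector_Spaces.linear_compose)
    fix x y m
    show "(\<alpha>M \<circ> \<beta>M) (\<beta>M (dia (\<gamma> x) m)) = \<beta>M (dia (\<gamma> ((\<gamma> \<circ> \<alpha>) x)) ((\<alpha>M \<circ> \<beta>M) m))"
      by (simp add: \<beta>_dia \<alpha>M_dia \<alpha>M_\<beta>M \<gamma>_\<alpha>)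
    show "(\<alpha>M \<circ> \<beta>M) (\<beta>M (bul (\<gamma> x) m)) = \<beta>M (bul (\<gamma> ((\<gamma> \<circ> \<alpha>) x)) ((\<alpha>M \<circ> \<beta>M) m))"
      by (simp add: \<beta>_bul \<alpha>M_bul \<alpha>M_\<beta>M \<gamma>_\<alpha>)
    show "\<beta>M (dia (\<gamma> (\<gamma> (br x y))) ((\<alpha>M \<circ> \<beta>M) m))
        = \<beta>M (dia (\<gamma> ((\<gamma> \<circ> \<alpha>) x)) (\<beta>M (dia (\<gamma> y) m)))
          - \<beta>M (dia (\<gamma> ((\<gamma> \<circ> \<alpha>) y)) (\<beta>M (dia (\<gamma> x) m)))"
      using dia_br[of "\<gamma> (\<gamma> x)" "\<gamma> (\<gamma> y)" "\<beta>M m"]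
      by (simp add: \<gamma>_br \<gamma>_\<alpha> \<beta>_dia \<beta>M.diff)
    show "\<beta>M (dia (\<gamma> (\<gamma> (dot x y))) ((\<alpha>M \<circ> \<beta>M) m))
        = \<beta>M (bul (\<gamma> ((\<gamma> \<circ> \<alpha>) x)) (\<beta>M (dia (\<gamma> y) m)))
          - \<beta>M (dia (\<gamma> ((\<gamma> \<circ> \<alpha>) y)) (\<beta>M (bul (\<gamma> x) m)))"
      using dia_dot[of "\<gamma> (\<gamma> x)" "\<gamma> (\<gamma> y)" "\<beta>M m"]
      by (simp add: \<gamma>_dot \<gamma>_\<alpha> \<beta>_dia \<beta>_bul \<beta>M.diff)
    show "\<beta>M (bul (\<gamma> (\<gamma> (br x y))) ((\<alpha>M \<circ> \<beta>M) m))
        = \<beta>M (bul (\<gamma> ((\<gamma> \<circ> \<alpha>) x)) (\<beta>M (bul (\<gamma> y) m)))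
          - \<beta>M (bul (\<gamma> ((\<gamma> \<circ> \<alpha>) y)) (\<beta>M (bul (\<gamma> x) m)))
          - \<beta>M (bul (\<gamma> (\<gamma> (dot x y))) ((\<alpha>M \<circ> \<beta>M) m))
          + \<beta>M (bul (\<gamma> (\<gamma> (dot y x))) ((\<alpha>M \<circ> \<beta>M) m))"
      using bul_br[of "\<gamma> (\<gamma> x)" "\<gamma> (\<gamma> y)" "\<beta>M m"]
      by (simp add: \<gamma>_br \<gamma>_dot \<gamma>_\<alpha> \<beta>_bul \<beta>M.add \<beta>M.diff)
  qed (fact vs)
qed

theorem mainTheorem9:
  fixes sL :: "'k::field \<Rightarrow> 'l::ab_group_add \<Rightarrow> 'l"
    and sM :: "'k \<Rightarrow> 'm::ab_group_add \<Rightarrow> 'm"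
    and br dot :: "'l \<Rightarrow> 'l \<Rightarrow> 'l" and \<alpha> :: "'l \<Rightarrow> 'l"
    and dia bul :: "'l \<Rightarrow> 'm \<Rightarrow> 'm" and \<alpha>M \<beta>M :: "'m \<Rightarrow> 'm"
  assumes char: "(2::'k) \<noteq> 0"
    and mult: "multiplicative_hom_post_lie sL br dot \<alpha>"
    and modl: "hom_post_lie_module sL br dot \<alpha> sM dia bul \<alpha>M"
    and linb: "Vector_Spaces.linear sM sM \<beta>M"
    and comm: "\<alpha>M \<circ> \<beta>M = \<beta>M \<circ> \<alpha>M"
    and bdia: "\<And>x m. \<beta>M (dia x m) = dia (\<alpha> x) (\<beta>M m)"
    and bbul: "\<And>x m. \<beta>M (bul x m) = bul (\<alpha> x) (\<beta>M m)"
  shows "hom_post_lie_module sL (\<lambda>x y. \<alpha> (br x y)) (\<lambda>x y. \<alpha> (dot x y)) (\<alpha> \<circ> \<alpha>)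
           sM (\<lambda>x m. \<beta>M (dia (\<alpha> x) m)) (\<lambda>x m. \<beta>M (bul (\<alpha> x) m)) (\<alpha>M \<circ> \<beta>M)"
proof -
  from mult have lin: "Vector_Spaces.linear sL sL \<alpha>"
    and \<alpha>_br: "\<And>x y. \<alpha> (br x y) = br (\<alpha> x) (\<alpha> y)"
    and \<alpha>_dot: "\<And>x y. \<alpha> (dot x y) = dot (\<alpha> x) (\<alpha> y)"
    unfolding multiplicative_hom_post_lie_def hom_post_lie_algebra_def hom_lie_algebra_def
    by blast+
  show ?thesis
    by (rule hom_post_lie_module_twist[OF modl lin _ _ _ linb comm])
      (rule \<alpha>_br \<alpha>_dot refl bdia bbul)+
qed

end
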